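(* For all positive integers $m,n,w,d$ with $1\le w\le m-1$, $$A(m,n,w,d)\le A_{\mathrm S}\left(n(m-1),\,1-\frac{dm}{nw(m-w)}\right).$$
   Context: $J(m,w)$ denotes the set of binary vectors of length $m$ and Hamming weight $w$. Elements of $J(m,w)^n$ are identified with $m\times n$ binary matrices all of whose columns have weight $w$, with binary Hamming distance. $A(m,n,w,d)$ is the maximum cardinality of a nonempty subset of $J(m,w)^n$ with pairwise Hamming distances at least $2d$. For a positive integer $N$ and a real $s$, $A_{\mathrm S}(N,s)$ denotes the maximum cardinality of a spherical code of dimension $N$ and maximum cosine $s$, i.e. of a set of points on the unit sphere of $\mathbb{R}^N$ (Euclidean norm) such that the inner product of any two distinct points is at most $s$. *)

theory Defs
  imports Complex_Main "HOL-Library.Extended_Nat"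
begin

text \<open>Elements of J(m,w)^n as m x n binary matrices (functions nat => nat => bool,
  False outside the index range [0,m) x [0,n)) all of whose columns have weight w.\<close>
definition Jmat :: "nat \<Rightarrow> nat \<Rightarrow> nat \<Rightarrow> (nat \<Rightarrow> nat \<Rightarrow> bool) set" where
  "Jmat m n w = {M. (\<forall>i j. M i j \<longrightarrow> i < m \<and> j < n) \<and>
                    (\<forall>j<n. card {i. i < m \<and> M i j} = w)}"

definition hamming :: "nat \<Rightarrow> nat \<Rightarrow> (nat \<Rightarrow> nat \<Rightarrow> bool) \<Rightarrow> (nat \<Rightarrow> nat \<Rightarrow> bool) \<Rightarrow> nat" where
  "hamming m n M M' = card {(i, j). i < m \<and> j < n \<and> M i j \<noteq> M' i j}"

definition is_cw_code :: "nat \<Rightarrow> nat \<Rightarrow> nat \<Rightarrow> nat \<Rightarrow> (nat \<Rightarrow> nat \<Rightarrow> bool) set \<Rightarrow> bool" where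
  "is_cw_code m n w d C \<longleftrightarrow> C \<noteq> {} \<and> C \<subseteq> Jmat m n w \<and>
     (\<forall>M\<in>C. \<forall>M'\<in>C. M \<noteq> M' \<longrightarrow> hamming m n M M' \<ge> 2 * d)"

definition A_cw :: "nat \<Rightarrow> nat \<Rightarrow> nat \<Rightarrow> nat \<Rightarrow> enat" where
  "A_cw m n w d = Sup {enat k | k. \<exists>C. finite C \<and> card C = k \<and> is_cw_code m n w d C}"

text \<open>Points of R^N represented as functions nat => real vanishing outside [0,N).\<close>
definition is_spherical_code :: "nat \<Rightarrow> real \<Rightarrow> (nat \<Rightarrow> real) set \<Rightarrow> bool" where
  "is_spherical_code N s C \<longleftrightarrow>
     (\<forall>x\<in>C. (\<forall>i\<ge>N. x i = 0) \<and> (\<Sum>i<N. (x i)^2) = 1) \<and>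
     (\<forall>x\<in>C. \<forall>y\<in>C. x \<noteq> y \<longrightarrow> (\<Sum>i<N. x i * y i) \<le> s)"

definition A_S :: "nat \<Rightarrow> real \<Rightarrow> enat" where
  "A_S N s = Sup {enat k | k. \<exists>C. finite C \<and> card C = k \<and> is_spherical_code N s C}"

end

theory Submission
  imports Defs
begin

text \<open>Centering each column of a constant-weight matrix at \<open>w/m\<close> places it in the hyperplane
  of zero coordinate sum, which is isometric to \<open>\<real>\<^sup>m\<^sup>-\<^sup>1\<close>. Two centered columns of weight \<open>w\<close>
  at Hamming distance \<open>t\<close> have inner product \<open>w(m - w)/m - t/2\<close>, so after concatenating the
  \<open>n\<close> columns and normalizing, the inner product of two codewords is \<open>1 - h m / (2 n w (m - w))\<close>
  for Hamming distance \<open>h\<close>. Distance at least \<open>2d\<close> therefore turns a constant-weight code into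
  a spherical code in dimension \<open>n(m - 1)\<close> with maximal cosine \<open>1 - d m / (n w (m - w))\<close>.\<close>

lemma sum_lessThan_mult_div_mod:
  fixes f :: "nat \<Rightarrow> nat \<Rightarrow> 'a::comm_monoid_add"
  assumes "q > 0"
  shows "(\<Sum>k<n * q. f (k div q) (k mod q)) = (\<Sum>j<n. \<Sum>i<q. f j i)"
proof -
  have "j * q + i < n * q" if "j < n" "i < q" for j i
  proof -
    have "(j + 1) * q \<le> n * q" using that by (intro mult_right_mono) auto
    then show ?thesis using that by simp
  qed
  then have "bij_betw (\<lambda>k. (k div q, k mod q)) {..<n * q} ({..<n} \<times> {..<q})"
    by (intro bij_betw_byWitness[where f' = "\<lambda>(j, i). j * q + i"])
      (use assms in \<open>auto simp: less_mult_imp_div_less\<close>)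
  then have "(\<Sum>k<n * q. f (k div q) (k mod q)) = (\<Sum>(j, i)\<in>{..<n} \<times> {..<q}. f j i)"
    using sum.reindex_bij_betw[where g = "\<lambda>(j, i). f j i"] by fastforce
  then show ?thesis by (simp add: sum.cartesian_product)
qed

lemma of_nat_card_lessThan_filter:
  fixes m :: nat
  shows "of_nat (card {i. i < m \<and> P i}) = (\<Sum>i<m. of_bool (P i) :: 'a::semiring_1)"
proof -
  have "(\<Sum>i<m. of_bool (P i) :: 'a) = of_nat (card ({..<m} \<inter> {i. P i}))"
    by (rule sum_of_bool_eq) simp_all
  also have "{..<m} \<inter> {i. P i} = {i. i < m \<and> P i}" by auto
  finally show ?thesis by simp
qed

definition hyperplane_shift :: "nat \<Rightarrow> real" where
  "hyperplane_shift m = (1 + sqrt (real m)) / (real m - 1)"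

text \<open>On the hyperplane of zero coordinate sum, dropping the last coordinate and shifting the
  others by \<open>\<alpha> v\<^sub>m\<^sub>-\<^sub>1\<close> is an isometry onto \<open>\<real>\<^sup>m\<^sup>-\<^sup>1\<close>
  because \<open>\<alpha> = (1 + \<surd>m)/(m - 1)\<close> solves \<open>(m - 1) \<alpha>\<^sup>2 - 2 \<alpha> = 1\<close>.\<close>
lemma inner_zero_sum_hyperplane_coordinates:
  fixes v v' :: "nat \<Rightarrow> real"
  assumes "m \<ge> 2" and v: "(\<Sum>i<m. v i) = 0" and v': "(\<Sum>i<m. v' i) = 0"
  shows "(\<Sum>i<m - 1. (v i + hyperplane_shift m * v (m - 1)) * (v' i + hyperplane_shift m * v' (m - 1)))
    = (\<Sum>i<m. v i * v' i)"
proof -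
  define \<alpha> where "\<alpha> = hyperplane_shift m"
  obtain q where m: "m = Suc q" and q: "q \<ge> 1" using assms(1) by (cases m) auto
  have last_v: "v q = - (\<Sum>i<q. v i)" and last_v': "v' q = - (\<Sum>i<q. v' i)"
    using v v' m by simp_all
  have \<alpha>_eq: "real q * \<alpha>\<^sup>2 - 2 * \<alpha> = 1"
  proof -
    have "\<alpha> * real q = 1 + sqrt (real m)" using m q by (simp add: \<alpha>_def hyperplane_shift_def)
    moreover have "real q * \<alpha>\<^sup>2 - 2 * \<alpha> = ((\<alpha> * real q)\<^sup>2 - 2 * (\<alpha> * real q)) / real q"
      using q by (simp add: power2_eq_square field_simps)
    ultimately have "real q * \<alpha>\<^sup>2 - 2 * \<alpha> = ((1 + sqrt (real m))\<^sup>2 - 2 * (1 + sqrt (real m))) / real q"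
      by simp
    also have "(1 + sqrt (real m))\<^sup>2 - 2 * (1 + sqrt (real m)) = real q"
      using m by (simp add: power2_eq_square algebra_simps)
    finally show ?thesis using q by simp
  qed
  have "(\<Sum>i<m - 1. (v i + \<alpha> * v (m - 1)) * (v' i + \<alpha> * v' (m - 1)))
      = (\<Sum>i<q. v i * v' i) + \<alpha> * v' q * (\<Sum>i<q. v i) + \<alpha> * v q * (\<Sum>i<q. v' i)
        + real q * \<alpha>\<^sup>2 * v q * v' q"
    using m by (simp add: algebra_simps sum.distrib sum_distrib_left sum_distrib_right power2_eq_square)
  also have "\<dots> = (\<Sum>i<q. v i * v' i) + v q * v' q * (real q * \<alpha>\<^sup>2 - 2 * \<alpha>)"
    by (simp add: last_v last_v' algebra_simps)
  also have "\<dots> = (\<Sum>i<m. v i * v' i)" using \<alpha>_eq m by simp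
  finally show ?thesis unfolding \<alpha>_def .
qed

lemma sum_column_Jmat:
  assumes "M \<in> Jmat m n w" "j < n"
  shows "(\<Sum>i<m. of_bool (M i j) :: real) = real w"
proof -
  have "card {i. i < m \<and> M i j} = w" using assms by (auto simp: Jmat_def)
  then show ?thesis by (metis of_nat_card_lessThan_filter)
qed

lemma hamming_eq_sum_column_distances:
  "hamming m n M M' = (\<Sum>j<n. card {i. i < m \<and> M i j \<noteq> M' i j})"
proof -
  have "{(i, j). i < m \<and> j < n \<and> M i j \<noteq> M' i j}
      = prod.swap ` Sigma {..<n} (\<lambda>j. {i. i < m \<and> M i j \<noteq> M' i j})" by auto
  then have "hamming m n M M' = card (Sigma {..<n} (\<lambda>j. {i. i < m \<and> M i j \<noteq> M' i j}))"
    unfolding hamming_def by (simp add: card_image)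
  also have "\<dots> = (\<Sum>j<n. card {i. i < m \<and> M i j \<noteq> M' i j})"
    by (rule card_SigmaI) auto
  finally show ?thesis .
qed

definition centered_column :: "nat \<Rightarrow> nat \<Rightarrow> (nat \<Rightarrow> nat \<Rightarrow> bool) \<Rightarrow> nat \<Rightarrow> nat \<Rightarrow> real" where
  "centered_column m w M j i = of_bool (M i j) - real w / real m"

lemma sum_centered_column:
  assumes "M \<in> Jmat m n w" "j < n" "m > 0"
  shows "(\<Sum>i<m. centered_column m w M j i) = 0"
  unfolding centered_column_def sum_subtractf sum_column_Jmat[OF assms(1,2)]
  using assms(3) by simp

lemma inner_centered_columns:
  assumes "M \<in> Jmat m n w" "M' \<in> Jmat m n w" "j < n" "m > 0"
  shows "(\<Sum>i<m. centered_column m w M j i * centered_column m w M' j i)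
    = real w - (real w)\<^sup>2 / real m - real (card {i. i < m \<and> M i j \<noteq> M' i j}) / 2"
proof -
  define x y where "x i = (of_bool (M i j) :: real)" and "y i = (of_bool (M' i j) :: real)" for i
  have sum_x: "(\<Sum>i<m. x i) = real w" and sum_y: "(\<Sum>i<m. y i) = real w"
    using assms sum_column_Jmat unfolding x_def y_def by blast+
  have "real (card {i. i < m \<and> M i j \<noteq> M' i j}) = (\<Sum>i<m. x i + y i - 2 * (x i * y i))"
    unfolding of_nat_card_lessThan_filter x_def y_def by (rule sum.cong) auto
  also have "\<dots> = 2 * real w - 2 * (\<Sum>i<m. x i * y i)"
    by (simp add: sum.distrib sum_subtractf sum_distrib_left sum_x sum_y)
  finally have "(\<Sum>i<m. x i * y i) = real w - real (card {i. i < m \<and> M i j \<noteq> M' i j}) / 2"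
    by linarith
  moreover have "(\<Sum>i<m. (x i - c) * (y i - c))
      = (\<Sum>i<m. x i * y i) - c * (\<Sum>i<m. x i) - c * (\<Sum>i<m. y i) + real m * c\<^sup>2" for c
    by (simp add: algebra_simps sum.distrib sum_subtractf sum_distrib_left power2_eq_square)
  ultimately have "(\<Sum>i<m. centered_column m w M j i * centered_column m w M' j i)
      = real w - real (card {i. i < m \<and> M i j \<noteq> M' i j}) / 2
        - 2 * (real w / real m) * real w + real m * (real w / real m)\<^sup>2"
    unfolding centered_column_def x_def[symmetric] y_def[symmetric] sum_x sum_y by simp
  then show ?thesis using assms(4) by (simp add: power2_eq_square field_simps)
qed

definition cw_embedding :: "nat \<Rightarrow> nat \<Rightarrow> nat \<Rightarrow> (nat \<Rightarrow> nat \<Rightarrow> bool) \<Rightarrow> nat \<Rightarrow> real" where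
  "cw_embedding m n w M k =
    (if k < n * (m - 1) then
       (let v = centered_column m w M (k div (m - 1)) in v (k mod (m - 1)) + hyperplane_shift m * v (m - 1))
       / sqrt (real n * real w * real (m - w) / real m)
     else 0)"

lemma inner_cw_embedding:
  assumes "M \<in> Jmat m n w" "M' \<in> Jmat m n w" "0 < n" "0 < w" "w < m"
  shows "(\<Sum>k<n * (m - 1). cw_embedding m n w M k * cw_embedding m n w M' k)
    = 1 - real (hamming m n M M') * real m / (2 * real n * real w * real (m - w))"
proof -
  define q where "q = m - 1"
  define K where "K = real n * real w * real (m - w) / real m"
  define u where "u M j i = centered_column m w M j i + hyperplane_shift m * centered_column m w M j q"
    for M j i
  have "q > 0" "m \<ge> 2" using assms unfolding q_def by auto
  have "K > 0" using assms unfolding K_def by simp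
  have "cw_embedding m n w M k = (if k < n * q then u M (k div q) (k mod q) / sqrt K else 0)" for M k
    by (simp add: cw_embedding_def u_def q_def K_def Let_def)
  then have "(\<Sum>k<n * q. cw_embedding m n w M k * cw_embedding m n w M' k)
      = (\<Sum>k<n * q. u M (k div q) (k mod q) * u M' (k div q) (k mod q)) / K"
    using \<open>K > 0\<close> by (simp add: sum_divide_distrib)
  also have "(\<Sum>k<n * q. u M (k div q) (k mod q) * u M' (k div q) (k mod q))
      = (\<Sum>j<n. \<Sum>i<q. u M j i * u M' j i)"
    by (rule sum_lessThan_mult_div_mod[OF \<open>q > 0\<close>])
  also have "\<dots> = (\<Sum>j<n. \<Sum>i<m. centered_column m w M j i * centered_column m w M' j i)"
    unfolding u_def q_def
    using assms \<open>m \<ge> 2\<close> by (intro sum.cong inner_zero_sum_hyperplane_coordinates sum_centered_column) auto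
  also have "\<dots> = (\<Sum>j<n. real w - (real w)\<^sup>2 / real m - real (card {i. i < m \<and> M i j \<noteq> M' i j}) / 2)"
    using assms by (intro sum.cong inner_centered_columns) auto
  also have "\<dots> = real n * (real w - (real w)\<^sup>2 / real m) - real (hamming m n M M') / 2"
    by (simp add: hamming_eq_sum_column_distances sum_subtractf sum_divide_distrib)
  also have "real n * (real w - (real w)\<^sup>2 / real m) = K"
    using assms by (simp add: K_def power2_eq_square field_simps)
  also have "(K - real (hamming m n M M') / 2) / K
      = 1 - real (hamming m n M M') * real m / (2 * real n * real w * real (m - w))"
    using \<open>K > 0\<close> assms unfolding K_def by (simp add: field_simps)
  finally show ?thesis unfolding q_def .
qed

lemma sum_square_cw_embedding:
  assumes "M \<in> Jmat m n w" "0 < n" "0 < w" "w < m"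
  shows "(\<Sum>k<n * (m - 1). (cw_embedding m n w M k)\<^sup>2) = 1"
  using inner_cw_embedding[OF assms(1,1,2-)] by (simp add: hamming_def power2_eq_square)

lemma hamming_eq_0_Jmat:
  assumes "M \<in> Jmat m n w" "M' \<in> Jmat m n w" "hamming m n M M' = 0"
  shows "M = M'"
proof -
  have "finite {(i, j). i < m \<and> j < n \<and> M i j \<noteq> M' i j}"
    by (rule finite_subset[of _ "{..<m} \<times> {..<n}"]) auto
  then have "M i j = M' i j" if "i < m" "j < n" for i j
    using assms(3) that unfolding hamming_def by auto
  moreover have "\<not> M i j \<and> \<not> M' i j" if "\<not> (i < m \<and> j < n)" for i j
    using assms(1,2) that unfolding Jmat_def by blast
  ultimately show ?thesis by blast
qed

lemma inj_on_cw_embedding: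
  assumes "0 < n" "0 < w" "w < m"
  shows "inj_on (cw_embedding m n w) (Jmat m n w)"
proof (rule inj_onI)
  fix M M' assume M: "M \<in> Jmat m n w" and M': "M' \<in> Jmat m n w"
    and eq: "cw_embedding m n w M = cw_embedding m n w M'"
  have "1 - real (hamming m n M M') * real m / (2 * real n * real w * real (m - w)) = 1"
    using inner_cw_embedding[OF M M' assms] sum_square_cw_embedding[OF M assms]
    by (simp add: eq power2_eq_square)
  then have "hamming m n M M' = 0" using assms by simp
  then show "M = M'" by (rule hamming_eq_0_Jmat[OF M M'])
qed

lemma is_spherical_code_cw_embedding:
  assumes "is_cw_code m n w d C" "0 < n" "0 < w" "w < m"
  shows "is_spherical_code (n * (m - 1)) (1 - real d * real m / (real n * real w * real (m - w)))
    (cw_embedding m n w ` C)"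
  unfolding is_spherical_code_def
proof (intro conjI ballI allI impI)
  fix x i assume "x \<in> cw_embedding m n w ` C" "n * (m - 1) \<le> i"
  then show "x i = 0" by (auto simp: cw_embedding_def)
next
  fix x assume "x \<in> cw_embedding m n w ` C"
  then obtain M where "M \<in> Jmat m n w" "x = cw_embedding m n w M"
    using assms(1) by (auto simp: is_cw_code_def)
  then show "(\<Sum>k<n * (m - 1). (x k)\<^sup>2) = 1" using sum_square_cw_embedding assms(2-) by blast
next
  fix x y assume "x \<in> cw_embedding m n w ` C" "y \<in> cw_embedding m n w ` C" "x \<noteq> y"
  then obtain M M' where MM': "M \<in> C" "M' \<in> C" "M \<noteq> M'"
    and xy: "x = cw_embedding m n w M" "y = cw_embedding m n w M'" by auto
  define X where "X = real n * real w * real (m - w)"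
  have "X > 0" using assms by (simp add: X_def)
  have "2 * d \<le> hamming m n M M'" using assms(1) MM' by (simp add: is_cw_code_def)
  then have "real (2 * d) * real m \<le> real (hamming m n M M') * real m"
    by (intro mult_right_mono of_nat_mono) simp_all
  then have "real d * real m / X \<le> real (hamming m n M M') * real m / (2 * X)"
    using \<open>X > 0\<close> by (simp add: field_simps)
  moreover have "(\<Sum>k<n * (m - 1). x k * y k) = 1 - real (hamming m n M M') * real m / (2 * X)"
    using assms(1) MM' unfolding xy X_def mult.assoc[symmetric]
    by (intro inner_cw_embedding) (use assms in \<open>auto simp: is_cw_code_def\<close>)
  ultimately show "(\<Sum>k<n * (m - 1). x k * y k) \<le> 1 - real d * real m / X" by simp
qed

theorem proposition12:
  fixes m n w d :: nat
  assumes "m > 0" "n > 0" "w > 0" "d > 0" "1 \<le> w" "w \<le> m - 1"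
  shows "A_cw m n w d \<le>
    A_S (n * (m - 1)) (1 - real d * real m / (real n * real w * real (m - w)))"
proof -
  have "w < m" using assms by linarith
  have "\<exists>C'. finite C' \<and> card C' = card C \<and>
      is_spherical_code (n * (m - 1)) (1 - real d * real m / (real n * real w * real (m - w))) C'"
    if "finite C" "is_cw_code m n w d C" for C
  proof (intro exI conjI)
    have "inj_on (cw_embedding m n w) C"
      using inj_on_cw_embedding[OF \<open>n > 0\<close> \<open>w > 0\<close> \<open>w < m\<close>] that(2)
      by (auto simp: is_cw_code_def intro: inj_on_subset)
    then show "card (cw_embedding m n w ` C) = card C" by (rule card_image)
  qed (use that \<open>n > 0\<close> \<open>w > 0\<close> \<open>w < m\<close> is_spherical_code_cw_embedding in auto)
  then show ?thesis
    unfolding A_cw_def A_S_def by (intro Sup_subset_mono) blast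
qed

end
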